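(* In the continuous Donation Game, let $\chi>1$ and $\kappa\in\mathbb{R}$. Suppose there exist a bounded measurable $\psi:[0,K]\to\mathbb{R}$, a probability measure $\sigma_X^0$ on $[0,K]$ and a Markov kernel $\sigma_X[x,y]$ from $[0,K]^2$ to $[0,K]$ such that for all $x,y\in[0,K]$, $$\big(u_X(x,y)-\kappa\big)-\chi\big(u_Y(x,y)-\kappa\big)=\psi(x)-\lambda\int\psi(s)\,d\sigma_X[x,y](s)-(1-\lambda)\int\psi(s)\,d\sigma_X^0(s).$$ Then $0\le\kappa\le b(K)-c(K)$.
   Context: Continuous Donation Game: fix $K>0$ and measurable nondecreasing functions $b,c:[0,K]\to\mathbb{R}$ with $b(0)=c(0)=0$ and $b(s)>c(s)$ for $s>0$. Action spaces $S_X=S_Y=[0,K]$, payoffs $u_X(x,y)=b(y)-c(x)$, $u_Y(x,y)=b(x)-c(y)$, discount factor $\lambda\in(0,1)$. *)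

theory Defs
  imports "HOL-Probability.Probability"
begin

definition act_space :: "real \<Rightarrow> real measure" where
  "act_space K = restrict_space borel {0..K}"

definition donation_game :: "real \<Rightarrow> (real \<Rightarrow> real) \<Rightarrow> (real \<Rightarrow> real) \<Rightarrow> bool" where
  "donation_game K b c \<longleftrightarrow>
     K > 0 \<and>
     b \<in> borel_measurable (act_space K) \<and> c \<in> borel_measurable (act_space K) \<and>
     mono_on {0..K} b \<and> mono_on {0..K} c \<and>
     b 0 = 0 \<and> c 0 = 0 \<and> (\<forall>s\<in>{0<..K}. b s > c s)"

definition uX :: "(real \<Rightarrow> real) \<Rightarrow> (real \<Rightarrow> real) \<Rightarrow> real \<Rightarrow> real \<Rightarrow> real" where
  "uX b c x y = b y - c x"

definition uY :: "(real \<Rightarrow> real) \<Rightarrow> (real \<Rightarrow> real) \<Rightarrow> real \<Rightarrow> real \<Rightarrow> real" where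
  "uY b c x y = b x - c y"

end

theory Submission
  imports Defs
begin

text \<open>
  Write \<open>V(x,y) = \<lambda> \<integral>\<psi> d\<sigma>[x,y] + (1-\<lambda>) \<integral>\<psi> d\<sigma>\<^sup>0\<close> for the continuation value; being an average
  of \<open>\<psi>\<close>, it lies between \<open>m = inf \<psi>\<close> and \<open>M = sup \<psi>\<close>. At \<open>y = 0\<close> the left-hand side of the
  hypothesis is at most \<open>(\<chi>-1)\<kappa>\<close>, so \<open>\<psi>(x) - M \<le> \<psi>(x) - V(x,0) \<le> (\<chi>-1)\<kappa>\<close> for every \<open>x\<close>, and
  taking the supremum over \<open>x\<close> gives \<open>(\<chi>-1)\<kappa> \<ge> 0\<close>. Dually, at \<open>y = K\<close> the left-hand side is at
  least \<open>-(\<chi>-1)(b(K)-c(K)-\<kappa>)\<close> by monotonicity of \<open>b\<close> and \<open>c\<close>, so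
  \<open>\<psi>(x) - m \<ge> \<psi>(x) - V(x,K) \<ge> -(\<chi>-1)(b(K)-c(K)-\<kappa>)\<close>, and taking the infimum over \<open>x\<close> gives
  \<open>(\<chi>-1)(b(K)-c(K)-\<kappa>) \<ge> 0\<close>.
\<close>

lemma integral_bounds:
  fixes f :: "'a \<Rightarrow> real"
  assumes "prob_space M" and f: "f \<in> borel_measurable M"
    and bounds: "\<forall>x\<in>space M. f x \<in> {lo..hi}"
  shows "(\<integral>x. f x \<partial>M) \<in> {lo..hi}"
proof -
  interpret prob_space M by fact
  have "integrable M f"
    by (rule integrable_const_bound[where B = "max \<bar>lo\<bar> \<bar>hi\<bar>"])
      (use bounds f in \<open>auto intro!: AE_I2 simp: abs_le_iff\<close>)
  then show ?thesis
    using bounds by (auto intro!: integral_ge_const integral_le_const)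
qed

lemma space_act_space: "space (act_space K) = {0..K}"
  by (simp add: act_space_def space_restrict_space)

lemma integral_act_space_bounds:
  fixes f :: "real \<Rightarrow> real"
  assumes N: "N \<in> space (prob_algebra (act_space K))"
    and f: "f \<in> borel_measurable (act_space K)"
    and bounds: "\<forall>s\<in>{0..K}. f s \<in> {lo..hi}"
  shows "(\<integral>s. f s \<partial>N) \<in> {lo..hi}"
proof -
  have sets_N: "sets N = sets (act_space K)" and prob: "prob_space N"
    using N by (auto simp: space_prob_algebra)
  show ?thesis
  proof (rule integral_bounds[OF prob])
    show "f \<in> borel_measurable N"
      using f measurable_cong_sets[OF sets_N refl] by blast
    show "\<forall>s\<in>space N. f s \<in> {lo..hi}"
      using bounds sets_eq_imp_space_eq[OF sets_N] by (simp add: space_act_space)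
  qed
qed

lemma kernel_act_space_in_prob_algebra:
  fixes k :: "real \<times> real \<Rightarrow> real measure"
  assumes "k \<in> (act_space K \<Otimes>\<^sub>M act_space K) \<rightarrow>\<^sub>M prob_algebra (act_space K)"
    and "x \<in> {0..K}" "y \<in> {0..K}"
  shows "k (x, y) \<in> space (prob_algebra (act_space K))"
  using measurable_space[OF assms(1), of "(x, y)"] assms(2,3)
  by (simp add: space_pair_measure space_act_space)

lemma convex_combination_in_interval:
  fixes lam u v :: real
  assumes "lam \<in> {0..1}" "u \<in> {lo..hi}" "v \<in> {lo..hi}"
  shows "lam * u + (1 - lam) * v \<in> {lo..hi}"
  using assms mult_left_mono[of lo u lam] mult_left_mono[of u hi lam]
    mult_left_mono[of lo v "1 - lam"] mult_left_mono[of v hi "1 - lam"]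
  by (auto simp: algebra_simps)

lemma donation_game_range:
  assumes "donation_game K b c" "x \<in> {0..K}"
  shows "0 \<le> b x" "b x \<le> b K" "0 \<le> c x" "c x \<le> c K"
proof -
  have mono: "mono_on {0..K} b" "mono_on {0..K} c" and "b 0 = 0" "c 0 = 0"
    using assms(1) by (auto simp: donation_game_def)
  moreover have "0 \<in> {0..K}" "K \<in> {0..K}"
    using assms(2) by auto
  ultimately show "0 \<le> b x" "b x \<le> b K" "0 \<le> c x" "c x \<le> c K"
    using mono_onD[OF mono(1), of 0 x] mono_onD[OF mono(1), of x K]
      mono_onD[OF mono(2), of 0 x] mono_onD[OF mono(2), of x K] assms(2) by auto
qed

lemma payoff_difference_at_zero_le:
  assumes "donation_game K b c" "x \<in> {0..K}" "chi \<ge> 0"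
  shows "(uX b c x 0 - kappa) - chi * (uY b c x 0 - kappa) \<le> (chi - 1) * kappa"
proof -
  have "b 0 = 0" "c 0 = 0"
    using assms(1) by (auto simp: donation_game_def)
  moreover have "0 \<le> chi * b x"
    using donation_game_range[OF assms(1,2)] assms(3) by simp
  ultimately show ?thesis
    using donation_game_range[OF assms(1,2)]
    by (simp add: uX_def uY_def algebra_simps)
qed

lemma payoff_difference_at_K_ge:
  assumes "donation_game K b c" "x \<in> {0..K}" "chi \<ge> 0"
  shows "- ((chi - 1) * (b K - c K - kappa)) \<le> (uX b c x K - kappa) - chi * (uY b c x K - kappa)"
proof -
  have "chi * b x \<le> chi * b K"
    using donation_game_range[OF assms(1,2)] assms(3) by (simp add: mult_left_mono)
  then show ?thesis
    using donation_game_range[OF assms(1,2)]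
    by (simp add: uX_def uY_def algebra_simps)
qed

theorem mainTheorem13:
  fixes K lam chi kappa :: real and b c psi :: "real \<Rightarrow> real"
    and sigma0 :: "real measure" and sigma :: "real \<times> real \<Rightarrow> real measure"
  assumes game: "donation_game K b c"
    and lam: "0 < lam" "lam < 1"
    and chi: "chi > 1"
    and psi_meas: "psi \<in> borel_measurable (act_space K)"
    and psi_bdd: "\<exists>B. \<forall>s\<in>{0..K}. \<bar>psi s\<bar> \<le> B"
    and sigma0: "sigma0 \<in> space (prob_algebra (act_space K))"
    and sigma: "sigma \<in> (act_space K \<Otimes>\<^sub>M act_space K) \<rightarrow>\<^sub>M prob_algebra (act_space K)"
    and eq: "\<forall>x\<in>{0..K}. \<forall>y\<in>{0..K}.
       (uX b c x y - kappa) - chi * (uY b c x y - kappa)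
         = psi x - lam * (\<integral>s. psi s \<partial>sigma (x, y)) - (1 - lam) * (\<integral>s. psi s \<partial>sigma0)"
  shows "0 \<le> kappa \<and> kappa \<le> b K - c K"
proof -
  obtain B where B: "\<forall>s\<in>{0..K}. \<bar>psi s\<bar> \<le> B"
    using psi_bdd by blast
  have K: "0 \<in> {0..K}" "K \<in> {0..K}" "{0..K} \<noteq> {}"
    using game by (auto simp: donation_game_def)
  define m where "m = (INF s\<in>{0..K}. psi s)"
  define M where "M = (SUP s\<in>{0..K}. psi s)"
  have bdd: "bdd_below (psi ` {0..K})" "bdd_above (psi ` {0..K})"
    using B by (force intro: bdd_belowI[where m = "- B"] bdd_aboveI[where M = B] simp: abs_le_iff)+
  have psi_range: "\<forall>s\<in>{0..K}. psi s \<in> {m..M}"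
    unfolding m_def M_def using bdd by (auto intro: cINF_lower cSUP_upper)
  have continuation: "lam * (\<integral>s. psi s \<partial>sigma (x, y)) + (1 - lam) * (\<integral>s. psi s \<partial>sigma0) \<in> {m..M}"
    if "x \<in> {0..K}" "y \<in> {0..K}" for x y
    using lam integral_act_space_bounds[OF sigma0 psi_meas psi_range]
      integral_act_space_bounds[OF kernel_act_space_in_prob_algebra[OF sigma that] psi_meas psi_range]
    by (intro convex_combination_in_interval) auto
  have "psi x \<le> M + (chi - 1) * kappa" if "x \<in> {0..K}" for x
    using eq continuation[OF that K(1)] payoff_difference_at_zero_le[OF game that, of chi kappa]
      chi K(1) that
    by fastforce
  then have "M \<le> M + (chi - 1) * kappa"
    unfolding M_def by (rule cSUP_least[OF K(3)])
  moreover have "m - (chi - 1) * (b K - c K - kappa) \<le> psi x" if "x \<in> {0..K}" for x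
    using eq continuation[OF that K(2)] payoff_difference_at_K_ge[OF game that, of chi kappa]
      chi K(2) that
    by fastforce
  then have "m - (chi - 1) * (b K - c K - kappa) \<le> m"
    unfolding m_def by (rule cINF_greatest[OF K(3)])
  ultimately show ?thesis
    using chi by (simp add: zero_le_mult_iff)
qed

end
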